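(* Let $\{A_1,A_2,A_3\}$ be a gyrobarycentrically independent set in the Einstein gyrovector plane $\mathbb{R}^2_s$, $\gamma_{ij}=\gamma_{\ominus A_i\oplus A_j}$, and let $C(A_1A_2A_3)$ be the circumgyrocircle of gyrotriangle $A_1A_2A_3$. Let $P=\frac{m_1\gamma_{A_1}A_1+m_2\gamma_{A_2}A_2+m_3\gamma_{A_3}A_3}{m_1\gamma_{A_1}+m_2\gamma_{A_2}+m_3\gamma_{A_3}}\in\mathbb{R}^2_s$. Put $\Delta_1=m_1m_2(\gamma_{12}-1)+m_1m_3(\gamma_{13}-1)+m_2m_3(\gamma_{23}-1)$, $\Delta_2=(\gamma_{12}-1)(\gamma_{13}-1)(\gamma_{23}-1)>0$, $F_0=m_1(\gamma_{12}-1)+m_3(\gamma_{23}-1)$, $F_1=m_1(\gamma_{12}-1)(\gamma_{13}-1)\pm\sqrt{-\Delta_1\Delta_2}$, $F_2=-m_3(\gamma_{13}-1)(\gamma_{23}-1)\pm\sqrt{-\Delta_1\Delta_2}$. Then the two tangency points $P_\pm$ of the gyrotangent gyrolines of $C(A_1A_2A_3)$ through $P$, when they exist, are $P_\pm=\frac{m_1'\gamma_{A_1}A_1+m_2'\gamma_{A_2}A_2+m_3'\gamma_{A_3}A_3}{m_1'\gamma_{A_1}+m_2'\gamma_{A_2}+m_3'\gamma_{A_3}}$ with $m_1'=F_0F_1(\gamma_{23}-1)$, $m_2'=F_1F_2$, $m_3'=-F_0F_2(\gamma_{12}-1)$. Moreover: (1) two distinct tangency points exist iff $\Delta_1<0$,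 iff $P$ lies in the exterior of $C(A_1A_2A_3)$; (2) they degenerate to a single one, $P_\pm=P$, iff $\Delta_1=0$, iff $P$ lies on $C(A_1A_2A_3)$; (3) there are none iff $\Delta_1>0$, iff $P$ lies in the interior. The constant $m_{P_\pm}$ of the representation of $P_\pm$ (where $m_{P_\pm}^2=\sum_k(m_k')^2+2(m_1'm_2'\gamma_{12}+m_1'm_3'\gamma_{13}+m_2'm_3'\gamma_{23})$) is $m_{P_\pm}=\Delta_2E_1\pm\sqrt{-\Delta_1\Delta_2}\,E_2$, where $E_1=(m_1-m_2+m_3)\{m_1(\gamma_{12}-1)+m_3(\gamma_{23}-1)\}-2m_1m_3(\gamma_{13}-1)$ and $E_2=-m_1(\gamma_{12}-1)^2+m_3(\gamma_{23}-1)^2+m_1(\gamma_{12}-1)(\gamma_{13}-1)-m_3(\gamma_{13}-1)(\gamma_{23}-1)+(m_1-m_3)(\gamma_{12}-1)(\gamma_{23}-1)$.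
   Context: Fix $s>0$; $\mathbb{R}^2_s=\{v\in\mathbb{R}^2:\|v\|<s\}$ with Einstein addition $u\oplus v=\frac{1}{1+u\cdot v/s^2}\{u+\frac{1}{\gamma_u}v+\frac{1}{s^2}\frac{\gamma_u}{1+\gamma_u}(u\cdot v)u\}$, $\gamma_v=(1-\|v\|^2/s^2)^{-1/2}$, $\ominus v=-v$; gyrodistance $\|\ominus X\oplus Y\|$. Gyrolines are intersections of Euclidean lines with the disc. Gyrobarycentric independence of $\{A_1,A_2,A_3\}$: $\ominus A_1\oplus A_2,\ominus A_1\oplus A_3$ linearly independent. The circumgyrocircle of $A_1A_2A_3$ is the set of points at gyrodistance $R$ from the point $O\in\mathbb{R}^2_s$ equigyrodistant (gyrodistance $R$) from $A_1,A_2,A_3$; interior/exterior: gyrodistance to $O$ less/greater than $R$. A gyrotangent gyroline meets the gyrocircle in exactly one point, its tangency point. *)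

theory Defs
  imports "HOL-Analysis.Analysis"
begin

definition gdisc :: "real \<Rightarrow> (real^2) set" where
  "gdisc s = {v. norm v < s}"

definition egamma :: "real \<Rightarrow> real^2 \<Rightarrow> real" where
  "egamma s v = 1 / sqrt (1 - (norm v)\<^sup>2 / s\<^sup>2)"

definition eplus :: "real \<Rightarrow> real^2 \<Rightarrow> real^2 \<Rightarrow> real^2" where
  "eplus s u v = (1 / (1 + (u \<bullet> v) / s\<^sup>2)) *\<^sub>R
      (u + (1 / egamma s u) *\<^sub>R v
         + ((1 / s\<^sup>2) * (egamma s u / (1 + egamma s u)) * (u \<bullet> v)) *\<^sub>R u)"

definition gyrodist :: "real \<Rightarrow> real^2 \<Rightarrow> real^2 \<Rightarrow> real" where
  "gyrodist s X Y = norm (eplus s (- X) Y)"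

definition gyrobary_indep :: "real \<Rightarrow> real^2 \<Rightarrow> real^2 \<Rightarrow> real^2 \<Rightarrow> bool" where
  "gyrobary_indep s A1 A2 A3 \<longleftrightarrow>
     (\<forall>c1 c2::real. c1 *\<^sub>R eplus s (- A1) A2 + c2 *\<^sub>R eplus s (- A1) A3 = 0 \<longrightarrow> c1 = 0 \<and> c2 = 0)"

definition gbary :: "real \<Rightarrow> real^2 \<Rightarrow> real^2 \<Rightarrow> real^2 \<Rightarrow> real \<Rightarrow> real \<Rightarrow> real \<Rightarrow> real^2" where
  "gbary s A1 A2 A3 m1 m2 m3 =
     (1 / (m1 * egamma s A1 + m2 * egamma s A2 + m3 * egamma s A3)) *\<^sub>R
       ((m1 * egamma s A1) *\<^sub>R A1 + (m2 * egamma s A2) *\<^sub>R A2 + (m3 * egamma s A3) *\<^sub>R A3)"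

definition gcircle :: "real \<Rightarrow> real^2 \<Rightarrow> real \<Rightarrow> (real^2) set" where
  "gcircle s Oc R = {X \<in> gdisc s. gyrodist s Oc X = R}"

definition gline :: "real \<Rightarrow> real^2 \<Rightarrow> real^2 \<Rightarrow> (real^2) set" where
  "gline s P d = {X \<in> gdisc s. \<exists>t::real. X = P + t *\<^sub>R d}"

definition tangency_point :: "real \<Rightarrow> (real^2) set \<Rightarrow> real^2 \<Rightarrow> real^2 \<Rightarrow> bool" where
  "tangency_point s C P T \<longleftrightarrow> (\<exists>d. d \<noteq> 0 \<and> gline s P d \<inter> C = {T})"

end

theory Submission
  imports Defs
begin

text \<open>In the Euclidean coordinates of the disc, the gyrocircle with gyrocentre O and gyroradius R
  is the ellipse k (1 - O.X/s^2)^2 = m (1 - |X|^2/s^2), where k = 1 - R^2/s^2 and m = 1 - |O|^2/s^2: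
  the zero set of a quadratic form B in homogeneous coordinates which is positive definite on
  directions, and gyrodist O X - R has the sign of B(X,X). A gyroline through P touches the
  ellipse exactly at its points on the polar line B(T,P) = 0, so there are two, one (T = P) or
  no tangency points according as B(P,P) is positive, zero or negative.

  Since A1, A2, A3 lie on the ellipse and gamma of (-X)+Y is gamma_X gamma_Y (1 - X.Y/s^2), the
  form at gyrobarycentric points n, p is -m sum_{i<j} (n_i p_j + n_j p_i)(gamma_ij - 1), divided by
  the two normalising denominators. So B(P,P) has the sign of -Delta1, and the claim about the
  weights m' reduces to polynomial identities in gamma_ij - 1 that hold once the square root is
  replaced by any rho with rho^2 = -Delta1 Delta2.\<close>

section \<open>Einstein addition\<close>

lemma disc_factor_pos:
  assumes "0 < s" "norm X < s"
  shows "0 < 1 - (norm X)\<^sup>2 / s\<^sup>2"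
proof -
  have "(norm X)\<^sup>2 < s\<^sup>2" using assms by (simp add: power_strict_mono)
  then show ?thesis using assms(1) by (simp add: field_simps)
qed

lemma egamma_pos:
  assumes "0 < s" "norm u < s"
  shows "0 < egamma s u"
  using disc_factor_pos[OF assms] by (simp add: egamma_def)

lemma egamma_sq_factor:
  assumes "0 < s" "norm u < s"
  shows "(egamma s u)\<^sup>2 * (1 - (norm u)\<^sup>2 / s\<^sup>2) = 1"
proof -
  define a where "a = 1 - (norm u)\<^sup>2 / s\<^sup>2"
  have "0 < a" unfolding a_def by (rule disc_factor_pos[OF assms])
  then show ?thesis by (simp add: egamma_def a_def[symmetric] power_divide)
qed

lemma egamma_coeff:
  assumes "0 < s" "norm u < s"
  shows "(1 / s\<^sup>2) * (egamma s u / (1 + egamma s u)) * (u \<bullet> u) = (egamma s u - 1) / egamma s u"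
proof -
  define g where "g = egamma s u"
  have g: "0 < g" "g\<^sup>2 * (1 - (u \<bullet> u) / s\<^sup>2) = 1"
    using egamma_pos[OF assms] egamma_sq_factor[OF assms] by (simp_all add: g_def power2_norm_eq_inner)
  then have uu: "u \<bullet> u = s\<^sup>2 * (g - 1) * (1 + g) / g\<^sup>2"
    using assms(1) by (simp add: field_simps power2_eq_square)
  show ?thesis
    unfolding g_def[symmetric] uu using g(1) assms(1) by (simp add: power2_eq_square)
qed

lemma abs_inner_lt:
  assumes "0 < s" "norm X < s" "norm Y < s"
  shows "\<bar>X \<bullet> Y\<bar> < s\<^sup>2"
proof -
  have "\<bar>X \<bullet> Y\<bar> \<le> norm X * norm Y" by (rule Cauchy_Schwarz_ineq2)
  also have "\<dots> < s * s" using assms by (intro mult_strict_mono) auto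
  finally show ?thesis by (simp add: power2_eq_square)
qed

lemma inner_factor_pos:
  assumes "0 < s" "norm X < s" "norm Y < s"
  shows "0 < 1 - (X \<bullet> Y) / s\<^sup>2"
  using abs_inner_lt[OF assms] assms(1) by (simp add: field_simps abs_less_iff)

lemma norm_eplus_sq:
  assumes s: "0 < s" and u: "norm u < s" and d: "1 + (u \<bullet> v) / s\<^sup>2 \<noteq> 0"
  shows "(norm (eplus s u v))\<^sup>2
    = s\<^sup>2 - s\<^sup>2 * (1 - (norm u)\<^sup>2 / s\<^sup>2) * (1 - (norm v)\<^sup>2 / s\<^sup>2) / (1 + (u \<bullet> v) / s\<^sup>2)\<^sup>2"
proof -
  define g where "g = egamma s u"
  define a where "a = u \<bullet> u"
  define b where "b = v \<bullet> v"
  define p where "p = u \<bullet> v"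
  define k where "k = (1 / s\<^sup>2) * (g / (1 + g)) * p"
  have g: "0 < g" "1 / g\<^sup>2 = 1 - a / s\<^sup>2"
    using egamma_pos[OF s u] egamma_sq_factor[OF s u]
    by (simp_all add: g_def a_def power2_norm_eq_inner field_simps)
  have "k * a = p * ((1 / s\<^sup>2) * (g / (1 + g)) * (u \<bullet> u))" by (simp add: k_def a_def)
  then have ka: "k * a = p * (g - 1) / g" unfolding g_def egamma_coeff[OF s u] by simp
  have "(norm (u + (1 / g) *\<^sub>R v + k *\<^sub>R u))\<^sup>2 = (1 + k)\<^sup>2 * a + b / g\<^sup>2 + 2 * (1 + k) * p / g"
    unfolding power2_norm_eq_inner
    by (simp add: inner_add_left inner_add_right inner_commute a_def b_def p_def power2_eq_square
        algebra_simps add_divide_distrib)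
  also have "\<dots> = a + b / g\<^sup>2 + 2 * p + p\<^sup>2 / s\<^sup>2"
  proof -
    have kp: "k * p * ((1 + g) / g) = p\<^sup>2 / s\<^sup>2"
      using g(1) by (simp add: k_def power2_eq_square)
    have "(1 + k)\<^sup>2 * a + 2 * (1 + k) * p / g = a + 2 * (k * a) + k * (k * a) + 2 * p / g + 2 * (k * p) / g"
      by (simp add: power2_eq_square algebra_simps add_divide_distrib)
    also have "\<dots> = a + 2 * p + k * p * ((1 + g) / g)"
      unfolding ka using g(1) by (simp add: field_simps)
    finally show ?thesis unfolding kp by simp
  qed
  also have "\<dots> = (1 + p / s\<^sup>2)\<^sup>2 * s\<^sup>2 - s\<^sup>2 * (1 - a / s\<^sup>2) * (1 - b / s\<^sup>2)"
  proof -
    have bg: "b / g\<^sup>2 = b * (1 - a / s\<^sup>2)" using g(2) by (metis times_divide_eq_right mult.right_neutral)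
    show ?thesis unfolding bg using s by (simp add: field_simps power2_eq_square)
  qed
  finally have n: "(norm (u + (1 / g) *\<^sub>R v + k *\<^sub>R u))\<^sup>2
      = (1 + p / s\<^sup>2)\<^sup>2 * s\<^sup>2 - s\<^sup>2 * (1 - a / s\<^sup>2) * (1 - b / s\<^sup>2)" .
  have "eplus s u v = (1 / (1 + p / s\<^sup>2)) *\<^sub>R (u + (1 / g) *\<^sub>R v + k *\<^sub>R u)"
    by (simp add: eplus_def g_def k_def p_def)
  then have "(norm (eplus s u v))\<^sup>2 = (norm (u + (1 / g) *\<^sub>R v + k *\<^sub>R u))\<^sup>2 / (1 + p / s\<^sup>2)\<^sup>2"
    by (simp add: power_divide)
  moreover have "1 + p / s\<^sup>2 \<noteq> 0" "(norm u)\<^sup>2 = a" "(norm v)\<^sup>2 = b"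
    using d by (simp_all add: a_def b_def p_def power2_norm_eq_inner)
  ultimately show ?thesis
    unfolding n p_def[symmetric] by (simp add: field_simps)
qed

lemma norm_eplus_neg_sq:
  assumes "0 < s" "norm X < s" "norm Y < s"
  shows "(norm (eplus s (- X) Y))\<^sup>2
    = s\<^sup>2 - s\<^sup>2 * (1 - (norm X)\<^sup>2 / s\<^sup>2) * (1 - (norm Y)\<^sup>2 / s\<^sup>2) / (1 - (X \<bullet> Y) / s\<^sup>2)\<^sup>2"
  using norm_eplus_sq[of s "- X" Y] inner_factor_pos[OF assms] assms by simp

lemma norm_eplus_neg_lt:
  assumes "0 < s" "norm X < s" "norm Y < s"
  shows "norm (eplus s (- X) Y) < s"
proof -
  have "0 < s\<^sup>2 * (1 - (norm X)\<^sup>2 / s\<^sup>2) * (1 - (norm Y)\<^sup>2 / s\<^sup>2) / (1 - (X \<bullet> Y) / s\<^sup>2)\<^sup>2"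
    using disc_factor_pos[of s X] disc_factor_pos[of s Y] inner_factor_pos[OF assms] assms by simp
  then have "(norm (eplus s (- X) Y))\<^sup>2 < s\<^sup>2" unfolding norm_eplus_neg_sq[OF assms] by linarith
  then show ?thesis using assms(1) by (simp add: power_less_imp_less_base)
qed

lemma egamma_eplus_neg:
  assumes "0 < s" "norm X < s" "norm Y < s"
  shows "egamma s (eplus s (- X) Y) = egamma s X * egamma s Y * (1 - (X \<bullet> Y) / s\<^sup>2)"
proof -
  define a where "a = 1 - (norm X)\<^sup>2 / s\<^sup>2"
  define b where "b = 1 - (norm Y)\<^sup>2 / s\<^sup>2"
  define p where "p = 1 - (X \<bullet> Y) / s\<^sup>2"
  have pos: "0 < a" "0 < b" "0 < p"
    using disc_factor_pos[of s X] disc_factor_pos[of s Y] inner_factor_pos[OF assms] assms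
    by (simp_all add: a_def b_def p_def)
  have "1 - (norm (eplus s (- X) Y))\<^sup>2 / s\<^sup>2 = a * b / p\<^sup>2"
    unfolding norm_eplus_neg_sq[OF assms] using assms(1) pos(3)
    by (simp add: a_def[symmetric] b_def[symmetric] p_def[symmetric] field_simps)
  then show ?thesis
    using pos
    by (simp add: egamma_def a_def[symmetric] b_def[symmetric] p_def[symmetric] real_sqrt_divide real_sqrt_mult)
qed

definition eplus_lin :: "real \<Rightarrow> real^2 \<Rightarrow> real^2 \<Rightarrow> real^2" where
  "eplus_lin s u v = (1 / egamma s u) *\<^sub>R v + ((1 / s\<^sup>2) * (egamma s u / (1 + egamma s u)) * (u \<bullet> v)) *\<^sub>R u"

lemma linear_eplus_lin: "linear (eplus_lin s u)"
  unfolding eplus_lin_def linear_iff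
  by (simp add: inner_add_right scaleR_add_right scaleR_add_left add_divide_distrib algebra_simps)

lemma eplus_lin_self:
  assumes "0 < s" "norm u < s"
  shows "eplus_lin s u u = u"
proof -
  have "eplus_lin s u u = (1 / egamma s u + (1 / s\<^sup>2) * (egamma s u / (1 + egamma s u)) * (u \<bullet> u)) *\<^sub>R u"
    by (simp add: eplus_lin_def scaleR_add_left)
  also have "\<dots> = u"
    unfolding egamma_coeff[OF assms] using egamma_pos[OF assms] by (simp add: add_divide_distrib[symmetric])
  finally show ?thesis .
qed

lemma eplus_neg_eq:
  assumes "0 < s" "norm a < s"
  shows "eplus s (- a) X = (1 / (1 - (a \<bullet> X) / s\<^sup>2)) *\<^sub>R eplus_lin s a (X - a)"
proof -
  have "egamma s (- a) = egamma s a" by (simp add: egamma_def)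
  then have "eplus s (- a) X = (1 / (1 - (a \<bullet> X) / s\<^sup>2)) *\<^sub>R (eplus_lin s a X - a)"
    by (simp add: eplus_def eplus_lin_def algebra_simps)
  also have "eplus_lin s a X - a = eplus_lin s a (X - a)"
    using linear_diff[OF linear_eplus_lin] eplus_lin_self[OF assms] by metis
  finally show ?thesis .
qed

lemma eplus_lin_eq_0_iff:
  assumes "0 < s" "norm a < s"
  shows "eplus_lin s a y = 0 \<longleftrightarrow> y = 0"
proof
  assume L: "eplus_lin s a y = 0"
  define g where "g = egamma s a"
  define c where "c = (1 / s\<^sup>2) * (g / (1 + g)) * (a \<bullet> y)"
  have g: "0 < g" using egamma_pos[OF assms] by (simp add: g_def)
  have "(1 / g) *\<^sub>R y + c *\<^sub>R a = 0" using L by (simp add: eplus_lin_def g_def c_def)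
  then have "g *\<^sub>R ((1 / g) *\<^sub>R y + c *\<^sub>R a) = 0" by simp
  then have y: "y = (- c * g) *\<^sub>R a" using g by (simp add: scaleR_add_right eq_neg_iff_add_eq_0 mult.commute)
  have "c = - c * g * ((1 / s\<^sup>2) * (g / (1 + g)) * (a \<bullet> a))"
    by (subst c_def, subst y) (simp add: algebra_simps)
  also have "\<dots> = - c * (g - 1)"
    unfolding g_def egamma_coeff[OF assms] using egamma_pos[OF assms] by simp
  finally have "c = 0" using g by (simp add: algebra_simps)
  then show "y = 0" using y by simp
qed (simp add: linear_0[OF linear_eplus_lin])

lemma eplus_neg_eq_0_iff:
  assumes "0 < s" "norm a < s" "norm X < s"
  shows "eplus s (- a) X = 0 \<longleftrightarrow> X = a"
proof -
  have "1 / (1 - (a \<bullet> X) / s\<^sup>2) \<noteq> 0"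
    using inner_factor_pos[OF assms] by (metis divide_eq_0_iff order_less_irrefl zero_neq_one)
  then show ?thesis
    unfolding eplus_neg_eq[OF assms(1,2)] scaleR_eq_0_iff eplus_lin_eq_0_iff[OF assms(1,2)] right_minus_eq
    by blast
qed

lemma egamma_gt_1:
  assumes "0 < s" "norm v < s" "v \<noteq> 0"
  shows "1 < egamma s v"
proof -
  have "0 < 1 - (norm v)\<^sup>2 / s\<^sup>2" by (rule disc_factor_pos[OF assms(1,2)])
  moreover have "1 - (norm v)\<^sup>2 / s\<^sup>2 < 1" using assms by simp
  ultimately have "sqrt (1 - (norm v)\<^sup>2 / s\<^sup>2) < 1" "0 < sqrt (1 - (norm v)\<^sup>2 / s\<^sup>2)" by simp_all
  then show ?thesis by (simp add: egamma_def)
qed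

lemma egamma_eplus_neg_gt_1:
  assumes "0 < s" "norm a < s" "norm X < s" "X \<noteq> a"
  shows "1 < egamma s (eplus s (- a) X)"
  using egamma_gt_1 norm_eplus_neg_lt eplus_neg_eq_0_iff assms by metis

lemma gyrobary_indep_affine:
  assumes s: "0 < s" and A: "norm A1 < s" "norm A2 < s" "norm A3 < s"
    and indep: "gyrobary_indep s A1 A2 A3"
    and w: "w1 + w2 + w3 = 0" "w1 *\<^sub>R A1 + w2 *\<^sub>R A2 + w3 *\<^sub>R A3 = 0"
  shows "w1 = 0 \<and> w2 = 0 \<and> w3 = 0"
proof -
  define a2 where "a2 = 1 - (A1 \<bullet> A2) / s\<^sup>2"
  define a3 where "a3 = 1 - (A1 \<bullet> A3) / s\<^sup>2"
  have a: "0 < a2" "0 < a3" using inner_factor_pos s A by (simp_all add: a2_def a3_def)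
  have w1: "w1 = - w2 - w3" using w(1) by simp
  have "w2 *\<^sub>R (A2 - A1) + w3 *\<^sub>R (A3 - A1) = 0"
    using w(2) unfolding w1 by (simp add: algebra_simps scaleR_diff_left scaleR_diff_right)
  then have "eplus_lin s A1 (w2 *\<^sub>R (A2 - A1) + w3 *\<^sub>R (A3 - A1)) = 0"
    by (simp add: linear_0[OF linear_eplus_lin])
  moreover have "eplus s (- A1) A2 = (1 / a2) *\<^sub>R eplus_lin s A1 (A2 - A1)"
    "eplus s (- A1) A3 = (1 / a3) *\<^sub>R eplus_lin s A1 (A3 - A1)"
    unfolding a2_def a3_def by (simp_all add: eplus_neg_eq[OF s A(1)])
  ultimately have "(w2 * a2) *\<^sub>R eplus s (- A1) A2 + (w3 * a3) *\<^sub>R eplus s (- A1) A3 = 0"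
    using a by (simp add: linear_add[OF linear_eplus_lin] linear_scale[OF linear_eplus_lin])
  then have "w2 * a2 = 0" "w3 * a3 = 0" using indep unfolding gyrobary_indep_def by blast+
  then show ?thesis using a w1 by simp
qed

section \<open>Tangency points of an ellipse inside the disc\<close>

lemma exists_orthogonal_nonzero: "\<exists>d::real^2. d \<noteq> 0 \<and> L \<bullet> d = 0"
proof (cases "L = 0")
  case True
  then show ?thesis by (intro exI[of _ "axis 1 1"]) (simp add: axis_eq_0_iff)
next
  case False
  then have "dim {x::real^2. L \<bullet> x = 0} = 1" by (simp add: dim_hyperplane)
  then show ?thesis
    by (metis (mono_tags, lifting) dim_eq_0 mem_Collect_eq singletonI subsetI zero_neq_one)
qed

lemma orthogonal_collinear:
  fixes L u v :: "real^2"
  assumes "L \<noteq> 0" "L \<bullet> u = 0" "L \<bullet> v = 0" "u \<noteq> 0"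
  shows "\<exists>l. v = l *\<^sub>R u"
proof (rule ccontr)
  assume "\<nexists>l. v = l *\<^sub>R u"
  then have "v \<notin> span {u}" by (auto simp: span_singleton)
  then have "independent {v, u}" using assms(4) by (simp add: independent_insert)
  moreover have "{v, u} \<subseteq> {x. L \<bullet> x = 0}" using assms(2,3) by auto
  ultimately have "card {v, u} \<le> dim {x::real^2. L \<bullet> x = 0}" by (metis independent_card_le_dim)
  moreover have "v \<noteq> u" using \<open>v \<notin> span {u}\<close> by (metis insertI1 span_base)
  ultimately show False using assms(1) by (simp add: dim_hyperplane)
qed

text \<open>Homogeneous coordinates \<open>(x0, x)\<close>. For \<open>k = 1 - R\<^sup>2/s\<^sup>2\<close> and \<open>m = 1 - \<parallel>Oc\<parallel>\<^sup>2/s\<^sup>2\<close>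
  the zero set of the quadratic form at \<open>x0 = 1\<close> is the gyrocircle with gyrocentre \<open>Oc\<close> and
  gyroradius \<open>R\<close> (see \<open>gyrodist_sq_minus_sq\<close>).\<close>
definition conic_form ::
    "real \<Rightarrow> real \<Rightarrow> real \<Rightarrow> real^2 \<Rightarrow> real \<Rightarrow> real^2 \<Rightarrow> real \<Rightarrow> real^2 \<Rightarrow> real" where
  "conic_form k m s Oc x0 x y0 y
     = k * (x0 - (Oc \<bullet> x) / s\<^sup>2) * (y0 - (Oc \<bullet> y) / s\<^sup>2) - m * (x0 * y0 - (x \<bullet> y) / s\<^sup>2)"

lemma conic_form_sym: "conic_form k m s Oc x0 x y0 y = conic_form k m s Oc y0 y x0 x"
  unfolding conic_form_def by (simp add: inner_commute mult.commute mult.left_commute)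

lemma conic_form_add_left:
  "conic_form k m s Oc (a0 + b0) (a + b) y0 y = conic_form k m s Oc a0 a y0 y + conic_form k m s Oc b0 b y0 y"
  unfolding conic_form_def by (simp add: inner_add_right inner_add_left algebra_simps add_divide_distrib)

lemma conic_form_scale_left:
  "conic_form k m s Oc (c * a0) (c *\<^sub>R a) y0 y = c * conic_form k m s Oc a0 a y0 y"
  unfolding conic_form_def by (simp add: algebra_simps)

lemma conic_form_add_right:
  "conic_form k m s Oc y0 y (a0 + b0) (a + b) = conic_form k m s Oc y0 y a0 a + conic_form k m s Oc y0 y b0 b"
  using conic_form_add_left conic_form_sym by metis

lemma conic_form_scale_right:
  "conic_form k m s Oc y0 y (c * a0) (c *\<^sub>R a) = c * conic_form k m s Oc y0 y a0 a"
  using conic_form_scale_left conic_form_sym by metis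

lemmas conic_form_linear =
  conic_form_add_left conic_form_scale_left conic_form_add_right conic_form_scale_right

lemma conic_form_line_left:
  "conic_form k m s Oc 1 (X + t *\<^sub>R d) y0 y = conic_form k m s Oc 1 X y0 y + t * conic_form k m s Oc 0 d y0 y"
proof -
  have "conic_form k m s Oc (1 + t * 0) (X + t *\<^sub>R d) y0 y
      = conic_form k m s Oc 1 X y0 y + t * conic_form k m s Oc 0 d y0 y"
    by (simp only: conic_form_add_left conic_form_scale_left)
  then show ?thesis by simp
qed

lemma conic_form_line:
  "conic_form k m s Oc 1 (X + t *\<^sub>R d) 1 (X + t *\<^sub>R d)
     = conic_form k m s Oc 1 X 1 X + 2 * t * conic_form k m s Oc 1 X 0 d + t\<^sup>2 * conic_form k m s Oc 0 d 0 d"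
proof -
  have "conic_form k m s Oc 1 X (1 + t * 0) (X + t *\<^sub>R d)
      = conic_form k m s Oc 1 X 1 X + t * conic_form k m s Oc 1 X 0 d"
    "conic_form k m s Oc 0 d (1 + t * 0) (X + t *\<^sub>R d)
      = conic_form k m s Oc 0 d 1 X + t * conic_form k m s Oc 0 d 0 d"
    by (simp_all only: conic_form_add_right conic_form_scale_right)
  then show ?thesis
    using conic_form_line_left[of k m s Oc X t d 1 "X + t *\<^sub>R d"] conic_form_sym[of k m s Oc 0 d 1 X]
    by (simp add: algebra_simps power2_eq_square)
qed

lemma conic_form_diff_right:
  "conic_form k m s Oc 1 T 0 (T - P) = conic_form k m s Oc 1 T 1 T - conic_form k m s Oc 1 T 1 P"
proof -
  have "conic_form k m s Oc 1 T (1 + (- 1) * 1) (T + (- 1) *\<^sub>R P)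
      = conic_form k m s Oc 1 T 1 T + (- 1) * conic_form k m s Oc 1 T 1 P"
    by (simp only: conic_form_add_right conic_form_scale_right)
  then show ?thesis by simp
qed

lemma conic_form_polar_affine:
  "\<exists>L c. (\<forall>X. conic_form k m s Oc 1 X 1 P = c + L \<bullet> X) \<and> (\<forall>d. conic_form k m s Oc 0 d 1 P = L \<bullet> d)"
proof (intro exI conjI allI)
  let ?L = "(m / s\<^sup>2) *\<^sub>R P - (k * (1 - (Oc \<bullet> P) / s\<^sup>2) / s\<^sup>2) *\<^sub>R Oc"
  fix X d
  show "conic_form k m s Oc 1 X 1 P = (k * (1 - (Oc \<bullet> P) / s\<^sup>2) - m) + ?L \<bullet> X"
    "conic_form k m s Oc 0 d 1 P = ?L \<bullet> d"
    unfolding conic_form_def by (simp_all add: inner_diff_left inner_commute algebra_simps diff_divide_distrib)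
qed

locale conic =
  fixes k m s :: real and Oc :: "real^2"
  assumes k_pos: "0 < k" and m_pos: "0 < m" and s_pos: "0 < s" and centre_in_disc: "norm Oc < s"
begin

abbreviation B :: "real \<Rightarrow> real^2 \<Rightarrow> real \<Rightarrow> real^2 \<Rightarrow> real" where
  "B \<equiv> conic_form k m s Oc"

definition curve :: "(real^2) set" where
  "curve = {X. B 1 X 1 X = 0}"

lemma direction_pos:
  assumes "d \<noteq> 0"
  shows "0 < B 0 d 0 d"
proof -
  have "B 0 d 0 d = k * ((Oc \<bullet> d) / s\<^sup>2)\<^sup>2 + m * ((d \<bullet> d) / s\<^sup>2)"
    unfolding conic_form_def by (simp add: power2_eq_square)
  moreover have "0 < (d \<bullet> d) / s\<^sup>2" using assms s_pos by simp
  ultimately show ?thesis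
    using k_pos m_pos by (metis add_nonneg_pos mult_pos_pos mult_nonneg_nonneg zero_le_power2 less_imp_le)
qed

lemma direction_nonneg: "0 \<le> B 0 d 0 d"
  using direction_pos[of d] by (cases "d = 0") (auto simp: conic_form_def)

lemma curve_subset_disc: "curve \<subseteq> gdisc s"
proof
  fix X assume "X \<in> curve"
  define t where "t = 1 - (Oc \<bullet> X) / s\<^sup>2"
  define b where "b = 1 - (norm X)\<^sup>2 / s\<^sup>2"
  have e: "k * t\<^sup>2 = m * b" using \<open>X \<in> curve\<close>
    by (simp add: curve_def conic_form_def t_def b_def power2_norm_eq_inner) (simp add: power2_eq_square mult.assoc)
  show "X \<in> gdisc s"
  proof (rule ccontr)
    assume "X \<notin> gdisc s"
    then have "b \<le> 0" using s_pos by (simp add: gdisc_def b_def power_mono)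
    then have "m * b \<le> 0" using m_pos by (simp add: mult_nonneg_nonpos)
    moreover have "0 \<le> k * t\<^sup>2" using k_pos by simp
    ultimately have "k * t\<^sup>2 = 0" "m * b = 0" using e by linarith+
    then have "t = 0" "b = 0" using k_pos m_pos by simp_all
    then have "Oc \<bullet> X = s\<^sup>2" "norm X = s" using s_pos by (simp_all add: t_def b_def)
    moreover have "\<bar>Oc \<bullet> X\<bar> \<le> norm Oc * norm X" by (rule Cauchy_Schwarz_ineq2)
    ultimately show False using centre_in_disc s_pos by (simp add: power2_eq_square)
  qed
qed

lemma polar_power:
  assumes "B 1 T 1 T = 0" "B 1 T 1 P = 0"
  shows "B 1 P 1 P = B 0 (T - P) 0 (T - P)"
  using conic_form_line[of k m s Oc T "- 1" "T - P"] conic_form_diff_right[of k m s Oc T P] assms by simp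

lemma tangent_direction:
  assumes "B 1 T 1 T = 0" "B 1 T 1 P = 0"
  obtains d where "d \<noteq> 0" "B 1 T 0 d = 0" "\<exists>t. P = T + t *\<^sub>R d"
proof (cases "T = P")
  case True
  obtain L c where L: "\<forall>d. B 0 d 1 T = L \<bullet> d"
    using conic_form_polar_affine by blast
  obtain d :: "real^2" where "d \<noteq> 0" "L \<bullet> d = 0" using exists_orthogonal_nonzero by blast
  moreover have "B 1 T 0 d = 0" using L \<open>L \<bullet> d = 0\<close> conic_form_sym by metis
  moreover have "P = T + 0 *\<^sub>R d" using True by simp
  ultimately show ?thesis using that by blast
next
  case False
  have "B 1 T 0 (T - P) = 0" unfolding conic_form_diff_right using assms by simp
  moreover have "P = T + (- 1) *\<^sub>R (T - P)" by simp
  ultimately show ?thesis using that False by (metis right_minus_eq)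
qed

text \<open>The restriction of gyrolines to the disc is harmless because \<open>curve \<subseteq> gdisc s\<close>.\<close>
lemma tangency_point_iff:
  "tangency_point s curve P T \<longleftrightarrow> B 1 T 1 T = 0 \<and> B 1 T 1 P = 0"
proof
  assume "tangency_point s curve P T"
  then obtain d where d: "d \<noteq> 0" and I: "gline s P d \<inter> curve = {T}"
    unfolding tangency_point_def by blast
  then have QT: "B 1 T 1 T = 0" by (auto simp: curve_def)
  from I obtain t0 where t0: "T = P + t0 *\<^sub>R d" unfolding gline_def by blast
  have a: "0 < B 0 d 0 d" using direction_pos[OF d] .
  have tangent: "B 1 T 0 d = 0"
  proof (rule ccontr)
    assume l: "B 1 T 0 d \<noteq> 0"
    define u where "u = - 2 * B 1 T 0 d / B 0 d 0 d"
    define X where "X = T + u *\<^sub>R d"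
    have "u \<noteq> 0" using l a by (simp add: u_def)
    have "B 1 X 1 X = 0"
      unfolding X_def conic_form_line QT u_def using a by (simp add: power2_eq_square field_simps)
    then have XC: "X \<in> curve" by (simp add: curve_def)
    moreover have "X = P + (t0 + u) *\<^sub>R d" by (simp add: X_def t0 scaleR_add_left)
    ultimately have "X \<in> gline s P d" using curve_subset_disc unfolding gline_def by blast
    then have "X = T" using XC I by blast
    then show False using \<open>u \<noteq> 0\<close> d by (simp add: X_def)
  qed
  have "B 1 T 1 P = B 1 P 1 T" by (rule conic_form_sym)
  also have "\<dots> = B 1 T 1 T - t0 * B 0 d 1 T"
    using conic_form_line_left[of k m s Oc T "- t0" d 1 T] t0 by simp
  also have "B 0 d 1 T = B 1 T 0 d" by (rule conic_form_sym)
  finally show "B 1 T 1 T = 0 \<and> B 1 T 1 P = 0" using QT tangent by simp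
next
  assume H: "B 1 T 1 T = 0 \<and> B 1 T 1 P = 0"
  then have TC: "T \<in> curve" by (simp add: curve_def)
  obtain d t1 where d: "d \<noteq> 0" "B 1 T 0 d = 0" and t1: "P = T + t1 *\<^sub>R d"
    using tangent_direction H by metis
  have "gline s P d \<inter> curve = {T}"
  proof
    have "T = P + (- t1) *\<^sub>R d" using t1 by simp
    then show "{T} \<subseteq> gline s P d \<inter> curve" using TC curve_subset_disc unfolding gline_def by blast
  next
    show "gline s P d \<inter> curve \<subseteq> {T}"
    proof
      fix X assume X: "X \<in> gline s P d \<inter> curve"
      then obtain t where "X = P + t *\<^sub>R d" unfolding gline_def by blast
      then have X2: "X = T + (t1 + t) *\<^sub>R d" using t1 by (simp add: scaleR_add_left)
      have "0 = B 1 X 1 X" using X by (simp add: curve_def)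
      also have "\<dots> = (t1 + t)\<^sup>2 * B 0 d 0 d" unfolding X2 conic_form_line using H d by simp
      finally have "t1 + t = 0" using direction_pos[OF d(1)] by simp
      then show "X \<in> {T}" using X2 by simp
    qed
  qed
  then show "tangency_point s curve P T" unfolding tangency_point_def using d by blast
qed

lemma tangency_points_empty:
  assumes "B 1 P 1 P < 0"
  shows "{T. tangency_point s curve P T} = {}"
proof -
  have "\<not> tangency_point s curve P T" for T
    using polar_power[of T P] direction_nonneg[of "T - P"] assms by (auto simp: tangency_point_iff)
  then show ?thesis by blast
qed

lemma tangency_points_singleton:
  assumes "B 1 P 1 P = 0"
  shows "{T. tangency_point s curve P T} = {P}"
proof -
  have "T = P" if "B 1 T 1 T = 0" "B 1 T 1 P = 0" for T
    using polar_power[OF that] direction_pos[of "T - P"] assms by force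
  then show ?thesis using assms by (auto simp: tangency_point_iff)
qed

lemma tangency_points_at_most_two:
  assumes P: "B 1 P 1 P \<noteq> 0"
    and T: "tangency_point s curve P T1" "tangency_point s curve P T2" "tangency_point s curve P T3"
  shows "T1 = T2 \<or> T1 = T3 \<or> T2 = T3"
proof (rule ccontr)
  assume distinct: "\<not> (T1 = T2 \<or> T1 = T3 \<or> T2 = T3)"
  have H: "B 1 T 1 T = 0" "B 1 T 1 P = 0" if "T \<in> {T1, T2, T3}" for T
    using that T by (auto simp: tangency_point_iff)
  obtain L c where L: "\<forall>X. B 1 X 1 P = c + L \<bullet> X"
    using conic_form_polar_affine by blast
  have "L \<noteq> 0" using L H[of T1] P by auto
  define u where "u = T2 - T1"
  have "u \<noteq> 0" "L \<bullet> u = 0" "L \<bullet> (T3 - T1) = 0"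
    using distinct L H[of T1] H[of T2] H[of T3] by (auto simp: u_def inner_diff_right)
  then obtain l where l: "T3 - T1 = l *\<^sub>R u" using orthogonal_collinear[OF \<open>L \<noteq> 0\<close>] by blast
  have on_curve: "2 * t * B 1 T1 0 u + t\<^sup>2 * B 0 u 0 u = 0" if "T1 + t *\<^sub>R u \<in> {T1, T2, T3}" for t
    using H[OF that] H[of T1] conic_form_line[of k m s Oc T1 t u] by simp
  have "T1 + 1 *\<^sub>R u = T2" "T1 + l *\<^sub>R u = T3" using l by (simp_all add: u_def algebra_simps)
  then have "2 * B 1 T1 0 u + B 0 u 0 u = 0" "2 * l * B 1 T1 0 u + l\<^sup>2 * B 0 u 0 u = 0"
    using on_curve[of 1] on_curve[of l] by auto
  moreover have "l * (l - 1) * B 0 u 0 u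
      = (2 * l * B 1 T1 0 u + l\<^sup>2 * B 0 u 0 u) - l * (2 * B 1 T1 0 u + B 0 u 0 u)"
    by (simp add: algebra_simps power2_eq_square)
  ultimately have "l * (l - 1) * B 0 u 0 u = 0" by simp
  then have "l = 0 \<or> l = 1" using direction_pos[OF \<open>u \<noteq> 0\<close>] by simp
  moreover have "l = 0 \<Longrightarrow> T1 = T3" "l = 1 \<Longrightarrow> T2 = T3" using l by (simp_all add: u_def)
  ultimately show False using distinct by blast
qed

lemma polar_meets_interior:
  assumes P: "0 < B 1 P 1 P" and Z: "B 1 Z 1 Z < 0"
  obtains Y where "B 1 Y 1 Y < 0" "B 1 Y 1 P = 0"
proof -
  define e where "e = B 1 P 1 P"
  define b where "b = B 1 Z 1 P"
  define y0 where "y0 = e * 1 + (- b) * 1"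
  define y where "y = e *\<^sub>R Z + (- b) *\<^sub>R P"
  have lin: "B y0 y w0 w = e * B 1 Z w0 w + (- b) * B 1 P w0 w"
    "B w0 w y0 y = e * B w0 w 1 Z + (- b) * B w0 w 1 P" for w0 w
    unfolding y0_def y_def by (simp_all only: conic_form_linear)
  have eq: "B y0 y y0 y = e * (e * B 1 Z 1 Z - b\<^sup>2)"
    unfolding lin conic_form_sym[of k m s Oc 1 P 1 Z] b_def[symmetric] e_def[symmetric]
    by (simp add: algebra_simps power2_eq_square)
  have "0 < e" using P by (simp add: e_def)
  then have "e * B 1 Z 1 Z < 0" using Z by (rule mult_pos_neg)
  then have "e * B 1 Z 1 Z - b\<^sup>2 < 0" using zero_le_power2[of b] by linarith
  then have neg: "B y0 y y0 y < 0" unfolding eq using \<open>0 < e\<close> by (rule mult_pos_neg[rotated])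
  have polar: "B y0 y 1 P = 0" unfolding lin b_def e_def by simp
  have "y0 \<noteq> 0" using neg direction_nonneg[of y] by auto
  define Y where "Y = (1 / y0) *\<^sub>R y"
  have "B 1 Y w0 w = (1 / y0) * B y0 y w0 w" "B w0 w 1 Y = (1 / y0) * B w0 w y0 y" for w0 w
    unfolding Y_def using \<open>y0 \<noteq> 0\<close> conic_form_scale_left[of k m s Oc "1 / y0" y0 y]
      conic_form_scale_right[of k m s Oc w0 w "1 / y0" y0 y] by simp_all
  then have "B 1 Y 1 Y = B y0 y y0 y / y0\<^sup>2" "B 1 Y 1 P = 0"
    using polar by (simp_all add: power2_eq_square)
  moreover have "B y0 y y0 y / y0\<^sup>2 < 0" using neg \<open>y0 \<noteq> 0\<close> by (simp add: divide_neg_pos)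
  ultimately have "B 1 Y 1 Y < 0" "B 1 Y 1 P = 0" by simp_all
  then show ?thesis by (rule that)
qed

lemma line_meets_curve_twice:
  assumes Y: "B 1 Y 1 Y < 0" and d: "d \<noteq> 0"
  obtains t1 t2 where "t1 \<noteq> t2" "Y + t1 *\<^sub>R d \<in> curve" "Y + t2 *\<^sub>R d \<in> curve"
proof -
  define a where "a = B 0 d 0 d"
  define \<beta> where "\<beta> = B 1 Y 0 d"
  define q where "q = B 1 Y 1 Y"
  define r where "r = sqrt (\<beta>\<^sup>2 - a * q)"
  have a: "0 < a" unfolding a_def by (rule direction_pos[OF d])
  moreover have "q < 0" using Y by (simp add: q_def)
  ultimately have "a * q < 0" by (rule mult_pos_neg)
  then have "0 < \<beta>\<^sup>2 - a * q" using zero_le_power2[of \<beta>] by linarith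
  then have r: "0 < r" "r\<^sup>2 = \<beta>\<^sup>2 - a * q" by (simp_all add: r_def)
  have root: "Y + ((- \<beta> + \<sigma> * r) / a) *\<^sub>R d \<in> curve" if "\<sigma>\<^sup>2 = 1" for \<sigma>
  proof -
    have "a * (q + 2 * ((- \<beta> + \<sigma> * r) / a) * \<beta> + ((- \<beta> + \<sigma> * r) / a)\<^sup>2 * a)
        = \<sigma>\<^sup>2 * r\<^sup>2 - (\<beta>\<^sup>2 - a * q)"
      using a by (simp add: field_simps power2_eq_square)
    then have "q + 2 * ((- \<beta> + \<sigma> * r) / a) * \<beta> + ((- \<beta> + \<sigma> * r) / a)\<^sup>2 * a = 0"
      using that r(2) a by simp
    then show ?thesis unfolding curve_def using conic_form_line a_def \<beta>_def q_def by simp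
  qed
  have "(- \<beta> + 1 * r) / a \<noteq> (- \<beta> + (- 1) * r) / a" using a r(1) by (simp add: field_simps)
  moreover have "Y + ((- \<beta> + 1 * r) / a) *\<^sub>R d \<in> curve" "Y + ((- \<beta> + (- 1) * r) / a) *\<^sub>R d \<in> curve"
    by (simp_all only: root power_one power2_minus)
  ultimately show ?thesis by (rule that)
qed

lemma two_tangency_points:
  assumes P: "0 < B 1 P 1 P" and Z: "B 1 Z 1 Z < 0"
  shows "\<exists>T1 T2. T1 \<noteq> T2 \<and> tangency_point s curve P T1 \<and> tangency_point s curve P T2"
proof -
  obtain Y where Y: "B 1 Y 1 Y < 0" "B 1 Y 1 P = 0" using polar_meets_interior[OF P Z] .
  obtain L c where L: "\<forall>X. B 1 X 1 P = c + L \<bullet> X" "\<forall>d. B 0 d 1 P = L \<bullet> d"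
    using conic_form_polar_affine by blast
  obtain d :: "real^2" where d: "d \<noteq> 0" "L \<bullet> d = 0" using exists_orthogonal_nonzero by blast
  obtain t1 t2 where t: "t1 \<noteq> t2" "Y + t1 *\<^sub>R d \<in> curve" "Y + t2 *\<^sub>R d \<in> curve"
    using line_meets_curve_twice[OF Y(1) d(1)] .
  have "B 1 (Y + t *\<^sub>R d) 1 P = 0" for t using conic_form_line_left Y(2) L(2) d(2) by simp
  moreover have "Y + t1 *\<^sub>R d \<noteq> Y + t2 *\<^sub>R d" using t(1) d(1) by simp
  ultimately show ?thesis
    unfolding tangency_point_iff using t(2,3) curve_def
    by (intro exI[of _ "Y + t1 *\<^sub>R d"] exI[of _ "Y + t2 *\<^sub>R d"]) simp
qed

lemma curve_egamma_weight:
  assumes "X \<in> curve"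
  shows "egamma s X * (1 - (Oc \<bullet> X) / s\<^sup>2) = sqrt (m / k)"
proof -
  have X: "norm X < s" using assms curve_subset_disc by (auto simp: gdisc_def)
  define c where "c = egamma s X"
  define t where "t = 1 - (Oc \<bullet> X) / s\<^sup>2"
  have "k * t\<^sup>2 = m * (1 - (norm X)\<^sup>2 / s\<^sup>2)" using assms
    by (simp add: curve_def conic_form_def t_def power2_norm_eq_inner) (simp add: power2_eq_square mult.assoc)
  then have "k * (c * t)\<^sup>2 = m * (c\<^sup>2 * (1 - (norm X)\<^sup>2 / s\<^sup>2))" by (simp add: power_mult_distrib)
  then have "(c * t)\<^sup>2 = m / k" using k_pos egamma_sq_factor[OF s_pos X] by (simp add: c_def field_simps)
  moreover have "0 < c * t"
    using egamma_pos[OF s_pos X] inner_factor_pos[OF s_pos centre_in_disc X] by (simp add: c_def t_def)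
  ultimately show ?thesis by (simp add: c_def t_def real_sqrt_unique)
qed

end

section \<open>The circumgyrocircle in gyrobarycentric coordinates\<close>

lemma gyrodist_sq_minus_sq:
  assumes s: "0 < s" and O: "norm Oc < s" and X: "norm X < s"
  shows "(gyrodist s Oc X)\<^sup>2 - R\<^sup>2
    = s\<^sup>2 * conic_form (1 - R\<^sup>2 / s\<^sup>2) (1 - (norm Oc)\<^sup>2 / s\<^sup>2) s Oc 1 X 1 X / (1 - (Oc \<bullet> X) / s\<^sup>2)\<^sup>2"
proof -
  define t where "t = 1 - (Oc \<bullet> X) / s\<^sup>2"
  have "t \<noteq> 0" using inner_factor_pos[OF assms] unfolding t_def by linarith
  have B: "conic_form (1 - R\<^sup>2 / s\<^sup>2) (1 - (norm Oc)\<^sup>2 / s\<^sup>2) s Oc 1 X 1 X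
      = (1 - R\<^sup>2 / s\<^sup>2) * t\<^sup>2 - (1 - (norm Oc)\<^sup>2 / s\<^sup>2) * (1 - (norm X)\<^sup>2 / s\<^sup>2)"
    by (simp add: conic_form_def t_def dot_square_norm power2_eq_square)
  show ?thesis
    unfolding gyrodist_def norm_eplus_neg_sq[OF assms] t_def[symmetric] B
    using \<open>t \<noteq> 0\<close> s by (simp add: field_simps) algebra
qed

lemma conic_form_combination:
  fixes A1 A2 A3 Oc :: "real^2"
  assumes s: "0 < s"
    and centre: "c1 * (1 - (Oc \<bullet> A1) / s\<^sup>2) = \<beta>" "c2 * (1 - (Oc \<bullet> A2) / s\<^sup>2) = \<beta>"
      "c3 * (1 - (Oc \<bullet> A3) / s\<^sup>2) = \<beta>"
    and diag: "c1 * c1 * (1 - (A1 \<bullet> A1) / s\<^sup>2) = 1" "c2 * c2 * (1 - (A2 \<bullet> A2) / s\<^sup>2) = 1"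
      "c3 * c3 * (1 - (A3 \<bullet> A3) / s\<^sup>2) = 1"
    and off: "c1 * c2 * (1 - (A1 \<bullet> A2) / s\<^sup>2) = g12" "c1 * c3 * (1 - (A1 \<bullet> A3) / s\<^sup>2) = g13"
      "c2 * c3 * (1 - (A2 \<bullet> A3) / s\<^sup>2) = g23"
    and k: "k * \<beta>\<^sup>2 = m"
  shows "conic_form k m s Oc
      (n1 * c1 + n2 * c2 + n3 * c3) ((n1 * c1) *\<^sub>R A1 + (n2 * c2) *\<^sub>R A2 + (n3 * c3) *\<^sub>R A3)
      (p1 * c1 + p2 * c2 + p3 * c3) ((p1 * c1) *\<^sub>R A1 + (p2 * c2) *\<^sub>R A2 + (p3 * c3) *\<^sub>R A3)
    = - m * ((n1 * p2 + n2 * p1) * (g12 - 1) + (n1 * p3 + n3 * p1) * (g13 - 1) + (n2 * p3 + n3 * p2) * (g23 - 1))"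
proof -
  have lin: "(n1 * c1 + n2 * c2 + n3 * c3) - (Oc \<bullet> ((n1 * c1) *\<^sub>R A1 + (n2 * c2) *\<^sub>R A2 + (n3 * c3) *\<^sub>R A3)) / s\<^sup>2
      = n1 * (c1 * (1 - (Oc \<bullet> A1) / s\<^sup>2)) + n2 * (c2 * (1 - (Oc \<bullet> A2) / s\<^sup>2)) + n3 * (c3 * (1 - (Oc \<bullet> A3) / s\<^sup>2))"
    for n1 n2 n3
    using s by (simp add: inner_add_right field_simps)
  have quad: "(n1 * c1 + n2 * c2 + n3 * c3) * (p1 * c1 + p2 * c2 + p3 * c3)
      - (((n1 * c1) *\<^sub>R A1 + (n2 * c2) *\<^sub>R A2 + (n3 * c3) *\<^sub>R A3) \<bullet> ((p1 * c1) *\<^sub>R A1 + (p2 * c2) *\<^sub>R A2 + (p3 * c3) *\<^sub>R A3)) / s\<^sup>2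
    = n1 * p1 * (c1 * c1 * (1 - (A1 \<bullet> A1) / s\<^sup>2)) + n2 * p2 * (c2 * c2 * (1 - (A2 \<bullet> A2) / s\<^sup>2))
      + n3 * p3 * (c3 * c3 * (1 - (A3 \<bullet> A3) / s\<^sup>2))
      + (n1 * p2 + n2 * p1) * (c1 * c2 * (1 - (A1 \<bullet> A2) / s\<^sup>2))
      + (n1 * p3 + n3 * p1) * (c1 * c3 * (1 - (A1 \<bullet> A3) / s\<^sup>2))
      + (n2 * p3 + n3 * p2) * (c2 * c3 * (1 - (A2 \<bullet> A3) / s\<^sup>2))"
    using s by (simp add: inner_add_left inner_add_right inner_commute field_simps)
  show ?thesis
    unfolding conic_form_def lin quad centre diag off
    by (simp add: k[symmetric] power2_eq_square algebra_simps)
qed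

locale circumgyrocircle =
  fixes s :: real and A1 A2 A3 Oc :: "real^2" and R :: real
  assumes s_pos: "0 < s"
    and A_in: "A1 \<in> gdisc s" "A2 \<in> gdisc s" "A3 \<in> gdisc s"
    and indep: "gyrobary_indep s A1 A2 A3"
    and circ: "Oc \<in> gdisc s" "gyrodist s Oc A1 = R" "gyrodist s Oc A2 = R" "gyrodist s Oc A3 = R"
begin

abbreviation \<gamma>12 :: real where "\<gamma>12 \<equiv> egamma s (eplus s (- A1) A2)"
abbreviation \<gamma>13 :: real where "\<gamma>13 \<equiv> egamma s (eplus s (- A1) A3)"
abbreviation \<gamma>23 :: real where "\<gamma>23 \<equiv> egamma s (eplus s (- A2) A3)"

lemma norms: "norm A1 < s" "norm A2 < s" "norm A3 < s" "norm Oc < s"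
  using A_in circ(1) by (simp_all add: gdisc_def)

lemma affine_independent:
  "w1 + w2 + w3 = 0 \<Longrightarrow> w1 *\<^sub>R A1 + w2 *\<^sub>R A2 + w3 *\<^sub>R A3 = 0 \<Longrightarrow> w1 = 0 \<and> w2 = 0 \<and> w3 = 0"
  using gyrobary_indep_affine[OF s_pos norms(1-3) indep] by blast

lemma vertices_distinct: "A2 \<noteq> A1" "A3 \<noteq> A1" "A3 \<noteq> A2"
  using affine_independent[of 1 "- 1" 0] affine_independent[of 1 0 "- 1"] affine_independent[of 0 1 "- 1"]
  by auto

lemma gamma_gt_1: "1 < \<gamma>12" "1 < \<gamma>13" "1 < \<gamma>23"
  using egamma_eplus_neg_gt_1[OF s_pos] norms vertices_distinct by simp_all

lemma R_pos: "0 < R"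
proof -
  have "eplus s (- Oc) A1 \<noteq> 0 \<or> eplus s (- Oc) A2 \<noteq> 0"
    using eplus_neg_eq_0_iff[OF s_pos norms(4)] norms vertices_distinct(1) by metis
  then show ?thesis using circ by (auto simp: gyrodist_def)
qed

definition \<kappa> :: real where "\<kappa> = 1 - R\<^sup>2 / s\<^sup>2"
definition \<mu> :: real where "\<mu> = 1 - (norm Oc)\<^sup>2 / s\<^sup>2"

lemma kappa_pos: "0 < \<kappa>"
proof -
  have "R < s" using norm_eplus_neg_lt[OF s_pos norms(4,1)] circ(2) by (simp add: gyrodist_def)
  then show ?thesis using disc_factor_pos[OF s_pos, of R] R_pos by (simp add: \<kappa>_def)
qed

lemma kappa_lt_1: "\<kappa> < 1"
  using R_pos s_pos by (simp add: \<kappa>_def)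

lemma mu_pos: "0 < \<mu>"
  unfolding \<mu>_def by (rule disc_factor_pos[OF s_pos norms(4)])

sublocale ellipse: conic \<kappa> \<mu> s Oc
  using kappa_pos mu_pos s_pos norms(4) by unfold_locales

lemma centre_inside: "ellipse.B 1 Oc 1 Oc < 0"
proof -
  have "ellipse.B 1 Oc 1 Oc = \<kappa> * \<mu> * \<mu> - \<mu> * \<mu>"
    by (simp add: conic_form_def \<mu>_def power2_norm_eq_inner)
  then have "ellipse.B 1 Oc 1 Oc = \<mu> * \<mu> * (\<kappa> - 1)" by (simp add: algebra_simps)
  then show ?thesis using mu_pos kappa_lt_1 by (simp add: mult_pos_neg)
qed

lemma gyrodist_sgn:
  assumes "X \<in> gdisc s"
  shows "sgn (gyrodist s Oc X - R) = sgn (ellipse.B 1 X 1 X)"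
proof -
  have X: "norm X < s" using assms by (simp add: gdisc_def)
  define f where "f = s\<^sup>2 / (1 - (Oc \<bullet> X) / s\<^sup>2)\<^sup>2"
  have "0 < f" using inner_factor_pos[OF s_pos norms(4) X] s_pos by (simp add: f_def)
  have "0 < gyrodist s Oc X + R" using R_pos by (simp add: gyrodist_def add_nonneg_pos)
  then have "sgn (gyrodist s Oc X - R) = sgn ((gyrodist s Oc X - R) * (gyrodist s Oc X + R))"
    by (simp add: sgn_mult)
  also have "(gyrodist s Oc X - R) * (gyrodist s Oc X + R) = f * ellipse.B 1 X 1 X"
    using gyrodist_sq_minus_sq[OF s_pos norms(4) X, of R]
    by (simp add: f_def \<kappa>_def \<mu>_def power2_eq_square algebra_simps)
  finally show ?thesis using \<open>0 < f\<close> by (simp add: sgn_mult)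
qed

lemma gcircle_eq_curve: "gcircle s Oc R = ellipse.curve"
proof -
  have "gyrodist s Oc X = R \<longleftrightarrow> ellipse.B 1 X 1 X = 0" if "X \<in> gdisc s" for X
    using gyrodist_sgn[OF that] by (metis eq_iff_diff_eq_0 sgn_0_0)
  then show ?thesis using ellipse.curve_subset_disc by (auto simp: gcircle_def ellipse.curve_def)
qed

lemma vertices_on_curve: "A1 \<in> ellipse.curve" "A2 \<in> ellipse.curve" "A3 \<in> ellipse.curve"
  using circ A_in by (simp_all add: gcircle_eq_curve[symmetric] gcircle_def)

lemma conic_form_gbary:
  assumes Wn: "n1 * egamma s A1 + n2 * egamma s A2 + n3 * egamma s A3 \<noteq> 0"
    and Wp: "p1 * egamma s A1 + p2 * egamma s A2 + p3 * egamma s A3 \<noteq> 0"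
  shows "ellipse.B 1 (gbary s A1 A2 A3 n1 n2 n3) 1 (gbary s A1 A2 A3 p1 p2 p3)
    = - \<mu> * ((n1 * p2 + n2 * p1) * (\<gamma>12 - 1) + (n1 * p3 + n3 * p1) * (\<gamma>13 - 1) + (n2 * p3 + n3 * p2) * (\<gamma>23 - 1))
      / ((n1 * egamma s A1 + n2 * egamma s A2 + n3 * egamma s A3) * (p1 * egamma s A1 + p2 * egamma s A2 + p3 * egamma s A3))"
proof -
  define c1 c2 c3 where "c1 = egamma s A1" and "c2 = egamma s A2" and "c3 = egamma s A3"
  define Wn Wp where "Wn = n1 * c1 + n2 * c2 + n3 * c3" and "Wp = p1 * c1 + p2 * c2 + p3 * c3"
  define Vn Vp where "Vn = (n1 * c1) *\<^sub>R A1 + (n2 * c2) *\<^sub>R A2 + (n3 * c3) *\<^sub>R A3"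
    and "Vp = (p1 * c1) *\<^sub>R A1 + (p2 * c2) *\<^sub>R A2 + (p3 * c3) *\<^sub>R A3"
  have W: "Wn \<noteq> 0" "Wp \<noteq> 0" using Wn Wp by (simp_all add: Wn_def Wp_def c1_def c2_def c3_def)
  have "ellipse.B ((1 / Wn) * Wn) ((1 / Wn) *\<^sub>R Vn) ((1 / Wp) * Wp) ((1 / Wp) *\<^sub>R Vp)
      = (1 / Wp) * ((1 / Wn) * ellipse.B Wn Vn Wp Vp)"
    by (simp only: conic_form_scale_left conic_form_scale_right)
  then have "ellipse.B 1 (gbary s A1 A2 A3 n1 n2 n3) 1 (gbary s A1 A2 A3 p1 p2 p3) = ellipse.B Wn Vn Wp Vp / (Wn * Wp)"
    using W by (simp add: gbary_def c1_def c2_def c3_def Wn_def Wp_def Vn_def Vp_def)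
  also have "ellipse.B Wn Vn Wp Vp
      = - \<mu> * ((n1 * p2 + n2 * p1) * (\<gamma>12 - 1) + (n1 * p3 + n3 * p1) * (\<gamma>13 - 1) + (n2 * p3 + n3 * p2) * (\<gamma>23 - 1))"
    unfolding Wn_def Wp_def Vn_def Vp_def
  proof (rule conic_form_combination[OF s_pos])
    show "c1 * (1 - (Oc \<bullet> A1) / s\<^sup>2) = sqrt (\<mu> / \<kappa>)" "c2 * (1 - (Oc \<bullet> A2) / s\<^sup>2) = sqrt (\<mu> / \<kappa>)"
      "c3 * (1 - (Oc \<bullet> A3) / s\<^sup>2) = sqrt (\<mu> / \<kappa>)"
      using ellipse.curve_egamma_weight vertices_on_curve by (simp_all add: c1_def c2_def c3_def)
    show "c1 * c1 * (1 - (A1 \<bullet> A1) / s\<^sup>2) = 1" "c2 * c2 * (1 - (A2 \<bullet> A2) / s\<^sup>2) = 1"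
      "c3 * c3 * (1 - (A3 \<bullet> A3) / s\<^sup>2) = 1"
      using egamma_sq_factor[OF s_pos] norms
      by (simp_all add: c1_def c2_def c3_def power2_eq_square power2_norm_eq_inner[symmetric])
    show "c1 * c2 * (1 - (A1 \<bullet> A2) / s\<^sup>2) = \<gamma>12" "c1 * c3 * (1 - (A1 \<bullet> A3) / s\<^sup>2) = \<gamma>13"
      "c2 * c3 * (1 - (A2 \<bullet> A3) / s\<^sup>2) = \<gamma>23"
      using egamma_eplus_neg[OF s_pos] norms by (simp_all add: c1_def c2_def c3_def)
    show "\<kappa> * (sqrt (\<mu> / \<kappa>))\<^sup>2 = \<mu>" using kappa_pos mu_pos by simp
  qed
  finally show ?thesis by (simp add: Wn_def Wp_def c1_def c2_def c3_def)
qed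

lemma polar_form_self:
  "(n1 * n2 + n2 * n1) * (\<gamma>12 - 1) + (n1 * n3 + n3 * n1) * (\<gamma>13 - 1) + (n2 * n3 + n3 * n2) * (\<gamma>23 - 1)
    = 2 * (n1 * n2 * (\<gamma>12 - 1) + n1 * n3 * (\<gamma>13 - 1) + n2 * n3 * (\<gamma>23 - 1))"
  by (simp add: algebra_simps)

lemma conic_form_gbary_sgn:
  assumes "m1 * egamma s A1 + m2 * egamma s A2 + m3 * egamma s A3 \<noteq> 0"
  shows "sgn (ellipse.B 1 (gbary s A1 A2 A3 m1 m2 m3) 1 (gbary s A1 A2 A3 m1 m2 m3))
    = - sgn (m1 * m2 * (\<gamma>12 - 1) + m1 * m3 * (\<gamma>13 - 1) + m2 * m3 * (\<gamma>23 - 1))"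
  unfolding conic_form_gbary[OF assms assms] polar_form_self
  using assms mu_pos by (simp add: sgn_mult sgn_divide del: distrib_left_numeral)

lemma gbary_position:
  assumes P: "P = gbary s A1 A2 A3 m1 m2 m3" "P \<in> gdisc s"
    and W: "m1 * egamma s A1 + m2 * egamma s A2 + m3 * egamma s A3 \<noteq> 0"
    and D: "D = m1 * m2 * (\<gamma>12 - 1) + m1 * m3 * (\<gamma>13 - 1) + m2 * m3 * (\<gamma>23 - 1)"
  shows "(D < 0 \<longleftrightarrow> gyrodist s Oc P > R) \<and> (D = 0 \<longleftrightarrow> gyrodist s Oc P = R)
    \<and> (D > 0 \<longleftrightarrow> gyrodist s Oc P < R)"
proof -
  have "sgn (gyrodist s Oc P - R) = - sgn D"
    using gyrodist_sgn[OF P(2)] conic_form_gbary_sgn[OF W] by (simp add: P(1) D)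
  then show ?thesis by (auto simp: sgn_if split: if_splits)
qed

lemma tangency_points_gbary:
  assumes P: "P = gbary s A1 A2 A3 m1 m2 m3"
    and W: "m1 * egamma s A1 + m2 * egamma s A2 + m3 * egamma s A3 \<noteq> 0"
    and D: "D = m1 * m2 * (\<gamma>12 - 1) + m1 * m3 * (\<gamma>13 - 1) + m2 * m3 * (\<gamma>23 - 1)"
  shows "((\<exists>T1 T2. T1 \<noteq> T2 \<and> tangency_point s (gcircle s Oc R) P T1 \<and> tangency_point s (gcircle s Oc R) P T2)
           \<longleftrightarrow> D < 0)
    \<and> ({T. tangency_point s (gcircle s Oc R) P T} = {P} \<longleftrightarrow> D = 0)
    \<and> ({T. tangency_point s (gcircle s Oc R) P T} = {} \<longleftrightarrow> D > 0)"
proof -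
  have sgn: "sgn (ellipse.B 1 P 1 P) = - sgn D" using conic_form_gbary_sgn[OF W] by (simp add: P D)
  have two: "\<exists>T1 T2. T1 \<noteq> T2 \<and> tangency_point s ellipse.curve P T1 \<and> tangency_point s ellipse.curve P T2"
    if "0 < ellipse.B 1 P 1 P"
    using ellipse.two_tangency_points[OF that centre_inside] .
  let ?tp = "tangency_point s ellipse.curve P"
  consider "0 < ellipse.B 1 P 1 P" | "ellipse.B 1 P 1 P = 0" | "ellipse.B 1 P 1 P < 0" by linarith
  then have "((\<exists>T1 T2. T1 \<noteq> T2 \<and> ?tp T1 \<and> ?tp T2) \<longleftrightarrow> D < 0)
    \<and> ({T. ?tp T} = {P} \<longleftrightarrow> D = 0) \<and> ({T. ?tp T} = {} \<longleftrightarrow> D > 0)"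
  proof cases
    case 1
    then have "D < 0" using sgn by (auto simp: sgn_if split: if_splits)
    moreover obtain T1 T2 where "T1 \<noteq> T2" "?tp T1" "?tp T2" using two[OF 1] by blast
    moreover have "\<not> ?tp P" using 1 by (simp add: ellipse.tangency_point_iff)
    then have "{T. ?tp T} \<noteq> {P}" by auto
    ultimately show ?thesis by auto
  next
    case 2
    then have "{T. ?tp T} = {P}" by (rule ellipse.tangency_points_singleton)
    moreover from this have "\<not> (\<exists>T1 T2. T1 \<noteq> T2 \<and> ?tp T1 \<and> ?tp T2)" by (metis mem_Collect_eq singletonD)
    ultimately show ?thesis using sgn 2 by (auto simp: sgn_if split: if_splits)
  next
    case 3
    then show ?thesis using sgn ellipse.tangency_points_empty[OF 3] by (auto simp: sgn_if split: if_splits)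
  qed
  then show ?thesis by (simp only: gcircle_eq_curve)
qed

lemma tangency_point_gbary_iff:
  assumes Wn: "n1 * egamma s A1 + n2 * egamma s A2 + n3 * egamma s A3 \<noteq> 0"
    and Wm: "m1 * egamma s A1 + m2 * egamma s A2 + m3 * egamma s A3 \<noteq> 0"
  shows "tangency_point s (gcircle s Oc R) (gbary s A1 A2 A3 m1 m2 m3) (gbary s A1 A2 A3 n1 n2 n3)
    \<longleftrightarrow> n1 * n2 * (\<gamma>12 - 1) + n1 * n3 * (\<gamma>13 - 1) + n2 * n3 * (\<gamma>23 - 1) = 0
      \<and> (n1 * m2 + n2 * m1) * (\<gamma>12 - 1) + (n1 * m3 + n3 * m1) * (\<gamma>13 - 1) + (n2 * m3 + n3 * m2) * (\<gamma>23 - 1) = 0"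
  unfolding gcircle_eq_curve ellipse.tangency_point_iff conic_form_gbary[OF Wn Wn] polar_form_self
    conic_form_gbary[OF Wn Wm]
  using Wn Wm mu_pos by (simp del: distrib_left_numeral)

lemma gbary_eq_imp_proportional:
  assumes Wa: "a1 * egamma s A1 + a2 * egamma s A2 + a3 * egamma s A3 \<noteq> 0"
    and Wb: "b1 * egamma s A1 + b2 * egamma s A2 + b3 * egamma s A3 \<noteq> 0"
    and eq: "gbary s A1 A2 A3 a1 a2 a3 = gbary s A1 A2 A3 b1 b2 b3"
  shows "\<exists>l. b1 = l * a1 \<and> b2 = l * a2 \<and> b3 = l * a3"
proof -
  define c1 c2 c3 where "c1 = egamma s A1" and "c2 = egamma s A2" and "c3 = egamma s A3"
  define A B where "A = a1 * c1 + a2 * c2 + a3 * c3" and "B = b1 * c1 + b2 * c2 + b3 * c3"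
  have c: "0 < c1" "0 < c2" "0 < c3" using egamma_pos[OF s_pos] norms by (simp_all add: c1_def c2_def c3_def)
  have AB: "A \<noteq> 0" "B \<noteq> 0" using Wa Wb by (simp_all add: A_def B_def c1_def c2_def c3_def)
  define w1 w2 w3 where "w1 = a1 * c1 / A - b1 * c1 / B" and "w2 = a2 * c2 / A - b2 * c2 / B"
    and "w3 = a3 * c3 / A - b3 * c3 / B"
  have "w1 + w2 + w3 = (a1 * c1 + a2 * c2 + a3 * c3) / A - (b1 * c1 + b2 * c2 + b3 * c3) / B"
    by (simp add: w1_def w2_def w3_def add_divide_distrib diff_divide_distrib)
  then have sum: "w1 + w2 + w3 = 0" using AB by (simp add: A_def[symmetric] B_def[symmetric])
  have "gbary s A1 A2 A3 a1 a2 a3 = (a1 * c1 / A) *\<^sub>R A1 + (a2 * c2 / A) *\<^sub>R A2 + (a3 * c3 / A) *\<^sub>R A3"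
    "gbary s A1 A2 A3 b1 b2 b3 = (b1 * c1 / B) *\<^sub>R A1 + (b2 * c2 / B) *\<^sub>R A2 + (b3 * c3 / B) *\<^sub>R A3"
    by (simp_all add: gbary_def A_def B_def c1_def c2_def c3_def scaleR_add_right)
  then have "w1 *\<^sub>R A1 + w2 *\<^sub>R A2 + w3 *\<^sub>R A3 = gbary s A1 A2 A3 a1 a2 a3 - gbary s A1 A2 A3 b1 b2 b3"
    by (simp add: w1_def w2_def w3_def scaleR_diff_left algebra_simps)
  then have "w1 *\<^sub>R A1 + w2 *\<^sub>R A2 + w3 *\<^sub>R A3 = 0" using eq by simp
  then have "w1 = 0" "w2 = 0" "w3 = 0" using affine_independent[OF sum] by simp_all
  then have "b1 = (B / A) * a1" "b2 = (B / A) * a2" "b3 = (B / A) * a3"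
    using AB c by (simp_all add: w1_def w2_def w3_def field_simps)
  then show ?thesis by blast
qed

end

section \<open>The weights of the tangency points\<close>

lemma tangent_weights_identities:
  fixes x y z m1 m2 m3 \<rho> F0 F1 F2 n1 n2 n3 :: real
  assumes F: "F0 = m1 * x + m3 * z" "F1 = m1 * x * y + \<rho>" "F2 = - m3 * y * z + \<rho>"
    and n: "n1 = F0 * F1 * z" "n2 = F1 * F2" "n3 = - F0 * F2 * x"
    and \<rho>: "\<rho>\<^sup>2 = - (m1 * m2 * x + m1 * m3 * y + m2 * m3 * z) * (x * y * z)"
  shows "n1 * n2 * x + n1 * n3 * y + n2 * n3 * z = 0"
    and "(n1 * m2 + n2 * m1) * x + (n1 * m3 + n3 * m1) * y + (n2 * m3 + n3 * m2) * z = 0"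
    and "n1 + n2 + n3 = x * y * z * ((m1 - m2 + m3) * (m1 * x + m3 * z) - 2 * m1 * m3 * y)
           + \<rho> * (- m1 * x\<^sup>2 + m3 * z\<^sup>2 + m1 * x * y - m3 * y * z + (m1 - m3) * x * z)"
proof -
  have "F1 - F2 = y * F0" using F by (simp add: algebra_simps)
  moreover have "n1 * n2 * x + n1 * n3 * y + n2 * n3 * z = F0 * F1 * F2 * x * z * (F1 - F2 - y * F0)"
    unfolding n by (simp add: algebra_simps)
  ultimately show "n1 * n2 * x + n1 * n3 * y + n2 * n3 * z = 0" by simp
  show "(n1 * m2 + n2 * m1) * x + (n1 * m3 + n3 * m1) * y + (n2 * m3 + n3 * m2) * z = 0"
    using \<rho> unfolding n F by algebra
  show "n1 + n2 + n3 = x * y * z * ((m1 - m2 + m3) * (m1 * x + m3 * z) - 2 * m1 * m3 * y)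
           + \<rho> * (- m1 * x\<^sup>2 + m3 * z\<^sup>2 + m1 * x * y - m3 * y * z + (m1 - m3) * x * z)"
    using \<rho> unfolding n F by algebra
qed

lemma tangent_weights_proportional:
  fixes x y z m1 m2 m3 r F0 :: real and F1 F2 n1 n2 n3 :: "real \<Rightarrow> real"
  assumes pos: "0 < x" "0 < y" "0 < z" "r \<noteq> 0"
    and r: "r\<^sup>2 = - (m1 * m2 * x + m1 * m3 * y + m2 * m3 * z) * (x * y * z)"
    and F: "F0 = m1 * x + m3 * z" "\<And>\<sigma>. F1 \<sigma> = m1 * x * y + \<sigma> * r" "\<And>\<sigma>. F2 \<sigma> = - m3 * y * z + \<sigma> * r"
    and n: "\<And>\<sigma>. n1 \<sigma> = F0 * F1 \<sigma> * z" "\<And>\<sigma>. n2 \<sigma> = F1 \<sigma> * F2 \<sigma>" "\<And>\<sigma>. n3 \<sigma> = - F0 * F2 \<sigma> * x"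
    and minor: "n1 1 * n3 (- 1) = n1 (- 1) * n3 1"
  shows "\<exists>\<sigma>\<in>{1, - 1}. n1 \<sigma> = 0 \<and> n2 \<sigma> = 0 \<and> n3 \<sigma> = 0"
proof -
  have "n1 1 * n3 (- 1) - n1 (- 1) * n3 1 = 2 * F0 ^ 3 * x * y * z * r"
    unfolding n F by (simp add: algebra_simps power3_eq_cube)
  then have "2 * F0 ^ 3 * x * y * z * r = 0" using minor by simp
  then have "F0 = 0" using pos by simp
  have "r\<^sup>2 = - (m2 * F0 + m1 * m3 * y) * (x * y * z)" using r F by (simp add: algebra_simps)
  also have "\<dots> = - (m1 * y) * (m3 * z) * (x * y)" using \<open>F0 = 0\<close> by (simp add: algebra_simps)
  also have "m3 * z = - (m1 * x)" using F \<open>F0 = 0\<close> by simp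
  finally have "r\<^sup>2 = (m1 * x * y)\<^sup>2" by (simp add: power2_eq_square algebra_simps)
  then have "F1 1 = 0 \<or> F1 (- 1) = 0" by (auto simp: F power2_eq_iff)
  then show ?thesis using \<open>F0 = 0\<close> by (auto simp: n)
qed

lemma gbary_mass_of_tangent_weights:
  fixes g12 g13 g23 m1 m2 m3 D1 D2 F0 E1 E2 \<sigma> :: real and F1 F2 m1' m2' m3' :: "real \<Rightarrow> real"
  assumes D1: "D1 = m1 * m2 * (g12 - 1) + m1 * m3 * (g13 - 1) + m2 * m3 * (g23 - 1)"
    and D2: "D2 = (g12 - 1) * (g13 - 1) * (g23 - 1)"
    and F0: "F0 = m1 * (g12 - 1) + m3 * (g23 - 1)"
    and F1: "F1 = (\<lambda>\<sigma>. m1 * (g12 - 1) * (g13 - 1) + \<sigma> * sqrt (- D1 * D2))"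
    and F2: "F2 = (\<lambda>\<sigma>. - m3 * (g13 - 1) * (g23 - 1) + \<sigma> * sqrt (- D1 * D2))"
    and m1': "m1' = (\<lambda>\<sigma>. F0 * F1 \<sigma> * (g23 - 1))" and m2': "m2' = (\<lambda>\<sigma>. F1 \<sigma> * F2 \<sigma>)"
    and m3': "m3' = (\<lambda>\<sigma>. - F0 * F2 \<sigma> * (g12 - 1))"
    and E1: "E1 = (m1 - m2 + m3) * (m1 * (g12 - 1) + m3 * (g23 - 1)) - 2 * m1 * m3 * (g13 - 1)"
    and E2: "E2 = - m1 * (g12 - 1)\<^sup>2 + m3 * (g23 - 1)\<^sup>2 + m1 * (g12 - 1) * (g13 - 1)
                 - m3 * (g13 - 1) * (g23 - 1) + (m1 - m3) * (g12 - 1) * (g23 - 1)"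
    and sign: "D1 \<le> 0" "0 \<le> D2" "\<sigma> \<in> {1, - 1}"
  shows "(m1' \<sigma>)\<^sup>2 + (m2' \<sigma>)\<^sup>2 + (m3' \<sigma>)\<^sup>2
      + 2 * (m1' \<sigma> * m2' \<sigma> * g12 + m1' \<sigma> * m3' \<sigma> * g13 + m2' \<sigma> * m3' \<sigma> * g23)
    = (D2 * E1 + \<sigma> * sqrt (- D1 * D2) * E2)\<^sup>2"
proof -
  define \<rho> where "\<rho> = \<sigma> * sqrt (- D1 * D2)"
  have "\<rho>\<^sup>2 = - D1 * D2" using sign by (auto simp: \<rho>_def power_mult_distrib mult_nonpos_nonneg)
  then have \<rho>: "\<rho>\<^sup>2 = - (m1 * m2 * (g12 - 1) + m1 * m3 * (g13 - 1) + m2 * m3 * (g23 - 1))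
      * ((g12 - 1) * (g13 - 1) * (g23 - 1))"
    by (simp add: D1 D2)
  have F: "F0 = m1 * (g12 - 1) + m3 * (g23 - 1)" "F1 \<sigma> = m1 * (g12 - 1) * (g13 - 1) + \<rho>"
    "F2 \<sigma> = - m3 * (g13 - 1) * (g23 - 1) + \<rho>"
    by (simp_all add: F0 F1 F2 \<rho>_def)
  have n: "m1' \<sigma> = F0 * F1 \<sigma> * (g23 - 1)" "m2' \<sigma> = F1 \<sigma> * F2 \<sigma>" "m3' \<sigma> = - F0 * F2 \<sigma> * (g12 - 1)"
    by (simp_all add: m1' m2' m3')
  note w = tangent_weights_identities[OF F n \<rho>]
  have "m1' \<sigma> + m2' \<sigma> + m3' \<sigma> = D2 * E1 + \<rho> * E2"
    unfolding w(3) D2 E1 E2 by (simp add: algebra_simps)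
  moreover have "(m1' \<sigma>)\<^sup>2 + (m2' \<sigma>)\<^sup>2 + (m3' \<sigma>)\<^sup>2
      + 2 * (m1' \<sigma> * m2' \<sigma> * g12 + m1' \<sigma> * m3' \<sigma> * g13 + m2' \<sigma> * m3' \<sigma> * g23)
    = (m1' \<sigma> + m2' \<sigma> + m3' \<sigma>)\<^sup>2
      + 2 * (m1' \<sigma> * m2' \<sigma> * (g12 - 1) + m1' \<sigma> * m3' \<sigma> * (g13 - 1) + m2' \<sigma> * m3' \<sigma> * (g23 - 1))"
    by (simp add: power2_eq_square algebra_simps)
  ultimately show ?thesis using w(1) by (simp add: \<rho>_def)
qed

lemma (in circumgyrocircle) tangent_weights_tangency_point:
  assumes P: "P = gbary s A1 A2 A3 m1 m2 m3"
    and W: "m1 * egamma s A1 + m2 * egamma s A2 + m3 * egamma s A3 \<noteq> 0"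
    and Wn: "n1 * egamma s A1 + n2 * egamma s A2 + n3 * egamma s A3 \<noteq> 0"
    and F: "F = m1 * (\<gamma>12 - 1) + m3 * (\<gamma>23 - 1)" "G = m1 * (\<gamma>12 - 1) * (\<gamma>13 - 1) + \<rho>"
      "H = - m3 * (\<gamma>13 - 1) * (\<gamma>23 - 1) + \<rho>"
    and n: "n1 = F * G * (\<gamma>23 - 1)" "n2 = G * H" "n3 = - F * H * (\<gamma>12 - 1)"
    and \<rho>: "\<rho>\<^sup>2 = - (m1 * m2 * (\<gamma>12 - 1) + m1 * m3 * (\<gamma>13 - 1) + m2 * m3 * (\<gamma>23 - 1))
      * ((\<gamma>12 - 1) * (\<gamma>13 - 1) * (\<gamma>23 - 1))"
  shows "tangency_point s (gcircle s Oc R) P (gbary s A1 A2 A3 n1 n2 n3)"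
  unfolding P tangency_point_gbary_iff[OF Wn W] using tangent_weights_identities[OF F n \<rho>] by simp

lemma (in circumgyrocircle) tangency_points_explicit:
  fixes m1 m2 m3 D1 D2 F0 :: real and F1 F2 m1' m2' m3' :: "real \<Rightarrow> real"
  assumes P: "P = gbary s A1 A2 A3 m1 m2 m3"
    and W: "m1 * egamma s A1 + m2 * egamma s A2 + m3 * egamma s A3 \<noteq> 0"
    and D1: "D1 = m1 * m2 * (\<gamma>12 - 1) + m1 * m3 * (\<gamma>13 - 1) + m2 * m3 * (\<gamma>23 - 1)"
    and D2: "D2 = (\<gamma>12 - 1) * (\<gamma>13 - 1) * (\<gamma>23 - 1)"
    and F0: "F0 = m1 * (\<gamma>12 - 1) + m3 * (\<gamma>23 - 1)"
    and F1: "F1 = (\<lambda>\<sigma>. m1 * (\<gamma>12 - 1) * (\<gamma>13 - 1) + \<sigma> * sqrt (- D1 * D2))"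
    and F2: "F2 = (\<lambda>\<sigma>. - m3 * (\<gamma>13 - 1) * (\<gamma>23 - 1) + \<sigma> * sqrt (- D1 * D2))"
    and m1': "m1' = (\<lambda>\<sigma>. F0 * F1 \<sigma> * (\<gamma>23 - 1))" and m2': "m2' = (\<lambda>\<sigma>. F1 \<sigma> * F2 \<sigma>)"
    and m3': "m3' = (\<lambda>\<sigma>. - F0 * F2 \<sigma> * (\<gamma>12 - 1))"
    and "D1 \<le> 0"
    and nondeg: "\<forall>\<sigma>\<in>{1, -1}. m1' \<sigma> * egamma s A1 + m2' \<sigma> * egamma s A2 + m3' \<sigma> * egamma s A3 \<noteq> 0"
  shows "{T. tangency_point s (gcircle s Oc R) P T}
    = {gbary s A1 A2 A3 (m1' 1) (m2' 1) (m3' 1), gbary s A1 A2 A3 (m1' (- 1)) (m2' (- 1)) (m3' (- 1))}"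
proof -
  define r where "r = sqrt (- D1 * D2)"
  have xyz: "0 < \<gamma>12 - 1" "0 < \<gamma>13 - 1" "0 < \<gamma>23 - 1" using gamma_gt_1 by simp_all
  then have "0 < D2" by (simp add: D2)
  then have r2: "r\<^sup>2 = - D1 * D2" using \<open>D1 \<le> 0\<close> by (simp add: r_def mult_nonpos_nonneg)
  let ?T = "\<lambda>\<sigma>. gbary s A1 A2 A3 (m1' \<sigma>) (m2' \<sigma>) (m3' \<sigma>)"
  have tangent: "tangency_point s (gcircle s Oc R) P (?T \<sigma>)" if \<sigma>: "\<sigma> \<in> {1, - 1}" for \<sigma>
  proof (rule tangent_weights_tangency_point[OF P W nondeg[rule_format, OF \<sigma>],
      where F = F0 and G = "F1 \<sigma>" and H = "F2 \<sigma>" and \<rho> = "\<sigma> * r"])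
    show "(\<sigma> * r)\<^sup>2 = - (m1 * m2 * (\<gamma>12 - 1) + m1 * m3 * (\<gamma>13 - 1) + m2 * m3 * (\<gamma>23 - 1))
        * ((\<gamma>12 - 1) * (\<gamma>13 - 1) * (\<gamma>23 - 1))"
      using \<sigma> r2 by (auto simp: power_mult_distrib D1 D2)
  qed (simp_all add: F0 F1 F2 m1' m2' m3' r_def)
  show ?thesis
  proof (cases "D1 = 0")
    case True
    then have "{T. tangency_point s (gcircle s Oc R) P T} = {P}" using tangency_points_gbary[OF P W D1] by simp
    then show ?thesis using tangent[of 1] tangent[of "- 1"] by auto
  next
    case False
    then have "0 < r" using \<open>D1 \<le> 0\<close> \<open>0 < D2\<close> by (simp add: r_def mult_neg_pos)
    have "?T 1 \<noteq> ?T (- 1)"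
    proof
      assume "?T 1 = ?T (- 1)"
      then obtain l where "m1' (- 1) = l * m1' 1" "m3' (- 1) = l * m3' 1"
        using gbary_eq_imp_proportional nondeg by (metis insert_iff)
      then have minor: "m1' 1 * m3' (- 1) = m1' (- 1) * m3' 1" by simp
      have F12: "F1 \<sigma> = m1 * (\<gamma>12 - 1) * (\<gamma>13 - 1) + \<sigma> * r"
        "F2 \<sigma> = - m3 * (\<gamma>13 - 1) * (\<gamma>23 - 1) + \<sigma> * r" for \<sigma>
        by (simp_all add: F1 F2 r_def)
      have n: "m1' \<sigma> = F0 * F1 \<sigma> * (\<gamma>23 - 1)" "m2' \<sigma> = F1 \<sigma> * F2 \<sigma>"
        "m3' \<sigma> = - F0 * F2 \<sigma> * (\<gamma>12 - 1)" for \<sigma>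
        by (simp_all add: m1' m2' m3')
      have "r \<noteq> 0" using \<open>0 < r\<close> by simp
      from tangent_weights_proportional[OF xyz this r2[unfolded D1 D2] F0 F12 n minor]
      obtain \<sigma> where "\<sigma> \<in> {1, - 1}" "m1' \<sigma> = 0" "m2' \<sigma> = 0" "m3' \<sigma> = 0" by blast
      then show False using nondeg by auto
    qed
    moreover have "ellipse.B 1 P 1 P \<noteq> 0"
      using conic_form_gbary_sgn[OF W] False by (metis P D1 sgn_0_0 neg_equal_0_iff_equal)
    then have "T \<in> {?T 1, ?T (- 1)} \<or> ?T 1 = ?T (- 1)" if "tangency_point s (gcircle s Oc R) P T" for T
      using ellipse.tangency_points_at_most_two tangent[of 1] tangent[of "- 1"] that
      unfolding gcircle_eq_curve by blast
    ultimately show ?thesis using tangent by auto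
  qed
qed

theorem mainTheorem15:
  fixes s :: real and A1 A2 A3 Oc :: "real^2" and R m1 m2 m3 :: real
    and g12 g13 g23 D1 D2 F0 E1 E2 :: real and P :: "real^2" and C :: "(real^2) set"
    and F1 F2 m1' m2' m3' :: "real \<Rightarrow> real" and Ppm :: "real \<Rightarrow> real^2"
  assumes "g12 = egamma s (eplus s (- A1) A2)"
      and "g13 = egamma s (eplus s (- A1) A3)"
      and "g23 = egamma s (eplus s (- A2) A3)"
      and "P = gbary s A1 A2 A3 m1 m2 m3"
      and "C = gcircle s Oc R"
      and "D1 = m1 * m2 * (g12 - 1) + m1 * m3 * (g13 - 1) + m2 * m3 * (g23 - 1)"
      and "D2 = (g12 - 1) * (g13 - 1) * (g23 - 1)"
      and "F0 = m1 * (g12 - 1) + m3 * (g23 - 1)"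
      and "F1 = (\<lambda>\<sigma>::real. m1 * (g12 - 1) * (g13 - 1) + \<sigma> * sqrt (- D1 * D2))"
      and "F2 = (\<lambda>\<sigma>::real. - m3 * (g13 - 1) * (g23 - 1) + \<sigma> * sqrt (- D1 * D2))"
      and "m1' = (\<lambda>\<sigma>. F0 * F1 \<sigma> * (g23 - 1))"
      and "m2' = (\<lambda>\<sigma>. F1 \<sigma> * F2 \<sigma>)"
      and "m3' = (\<lambda>\<sigma>. - F0 * F2 \<sigma> * (g12 - 1))"
      and "Ppm = (\<lambda>\<sigma>. gbary s A1 A2 A3 (m1' \<sigma>) (m2' \<sigma>) (m3' \<sigma>))"
      and "E1 = (m1 - m2 + m3) * (m1 * (g12 - 1) + m3 * (g23 - 1)) - 2 * m1 * m3 * (g13 - 1)"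
      and "E2 = - m1 * (g12 - 1)\<^sup>2 + m3 * (g23 - 1)\<^sup>2 + m1 * (g12 - 1) * (g13 - 1)
                 - m3 * (g13 - 1) * (g23 - 1) + (m1 - m3) * (g12 - 1) * (g23 - 1)"
      and s_pos: "s > 0"
      and A_in: "A1 \<in> gdisc s" "A2 \<in> gdisc s" "A3 \<in> gdisc s"
      and indep: "gyrobary_indep s A1 A2 A3"
      and circ: "Oc \<in> gdisc s" "gyrodist s Oc A1 = R" "gyrodist s Oc A2 = R" "gyrodist s Oc A3 = R"
      and den: "m1 * egamma s A1 + m2 * egamma s A2 + m3 * egamma s A3 \<noteq> 0"
      and P_in: "P \<in> gdisc s"
  shows "D2 > 0
    \<and> (D1 \<le> 0 \<longrightarrow>
         (\<forall>\<sigma>\<in>{1, -1}. m1' \<sigma> * egamma s A1 + m2' \<sigma> * egamma s A2 + m3' \<sigma> * egamma s A3 \<noteq> 0) \<longrightarrow>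
         {T. tangency_point s C P T} = {Ppm 1, Ppm (-1)})
    \<and> ((\<exists>T1 T2. T1 \<noteq> T2 \<and> tangency_point s C P T1 \<and> tangency_point s C P T2) \<longleftrightarrow> D1 < 0)
    \<and> (D1 < 0 \<longleftrightarrow> gyrodist s Oc P > R)
    \<and> ({T. tangency_point s C P T} = {P} \<longleftrightarrow> D1 = 0)
    \<and> (D1 = 0 \<longleftrightarrow> gyrodist s Oc P = R)
    \<and> ({T. tangency_point s C P T} = {} \<longleftrightarrow> D1 > 0)
    \<and> (D1 > 0 \<longleftrightarrow> gyrodist s Oc P < R)
    \<and> (D1 \<le> 0 \<longrightarrow> (\<forall>\<sigma>\<in>{1, -1}.
          (m1' \<sigma>)\<^sup>2 + (m2' \<sigma>)\<^sup>2 + (m3' \<sigma>)\<^sup>2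
            + 2 * (m1' \<sigma> * m2' \<sigma> * g12 + m1' \<sigma> * m3' \<sigma> * g13 + m2' \<sigma> * m3' \<sigma> * g23)
          = (D2 * E1 + \<sigma> * sqrt (- D1 * D2) * E2)\<^sup>2))"
proof -
  interpret circumgyrocircle s A1 A2 A3 Oc R
    using s_pos A_in indep circ by unfold_locales
  note gammas = assms(1-3)[symmetric]
  have "D2 > 0" using gamma_gt_1[unfolded gammas] by (simp add: assms(7))
  show ?thesis
    unfolding assms(5,14)
    using \<open>D2 > 0\<close> less_imp_le[OF \<open>D2 > 0\<close>]
      tangency_points_gbary[OF assms(4) den, unfolded gammas, OF assms(6)]
      gbary_position[OF assms(4) P_in den, unfolded gammas, OF assms(6)]
      tangency_points_explicit[OF assms(4) den, unfolded gammas, OF assms(6-13)]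
      gbary_mass_of_tangent_weights[OF assms(6-13,15,16)]
    by (intro conjI) simp_all
qed

end
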